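(* Let $Q$ be an $n\times n$ real symmetric matrix, $\Delta_n := \{x \in \mathbb{R}^n : x \ge 0,\ \sum_j x_j = 1\}$, $\nu(Q) := \min_{x\in\Delta_n} x^TQx$, let $\ell$ be any lower bound on $\nu(Q)$, let $M_j = \max_{i=1,\ldots,n} Q_{ij} - \ell$ and let $U_j \ge M_j$ for $j = 1,\ldots,n$. Let $e_j$ denote the $j$-th unit vector and $e$ the all-ones vector in $\mathbb{R}^n$. Consider the two mixed integer linear programs (MILP1), in variables $x,s\in\mathbb{R}^n$, $y\in\{0,1\}^n$, $\lambda\in\mathbb{R}$: \[ \min\ \lambda\ \text{ s.t. } Qx - \lambda e - s = 0,\ e^Tx = 1,\ x_j \le y_j,\ s_j \le M_j(1-y_j)\ (j=1,\ldots,n),\ x\ge 0,\ s \ge 0,\ y_j\in\{0,1\}; \] (MILP2), in variables $x,z\in\mathbb{R}^n$, $y\in\{0,1\}^n$, $\alpha\in\mathbb{R}$: \[ \min\ \alpha\ \text{ s.t. } e_j^TQx \le \alpha + z_j,\ e^Tx = 1,\ x_j \le y_j,\ z_j \le U_j(1-y_j)\ (j=1,\ldots,n),\ x\ge 0,\ z\ge 0,\ y_j\in\{0,1\}. \] Then the inequalities \[ y_i + y_j \le 1 \quad \text{for all } 1 \le i < j \le n \text{ with } Q_{ii} + Q_{jj} - 2Q_{ij} \le 0 \] are valid for both (MILP1) and (MILP2), i.e., adding them to either formulation does not change its optimal value $\nu(Q)$. *)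

theory Defs
  imports "HOL-Analysis.Analysis"
begin

definition std_simplex :: "(real ^ 'n) set" where
  "std_simplex = {x. (\<forall>j. x $ j \<ge> 0) \<and> (\<Sum>j\<in>UNIV. x $ j) = 1}"

definition nu :: "real ^ 'n ^ 'n \<Rightarrow> real" where
  "nu Q = Inf {x \<bullet> (Q *v x) | x. x \<in> std_simplex}"

definition Mbound :: "real ^ 'n ^ 'n \<Rightarrow> real \<Rightarrow> 'n \<Rightarrow> real" where
  "Mbound Q l j = Max {Q $ i $ j | i. True} - l"

definition milp1_feasible ::
  "real ^ 'n ^ 'n \<Rightarrow> ('n \<Rightarrow> real) \<Rightarrow> real ^ 'n \<Rightarrow> real ^ 'n \<Rightarrow> real ^ 'n \<Rightarrow> real \<Rightarrow> bool" where
  "milp1_feasible Q M x s y lam \<longleftrightarrow>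
     Q *v x - lam *\<^sub>R (\<chi> j. 1) - s = 0 \<and>
     (\<Sum>j\<in>UNIV. x $ j) = 1 \<and>
     (\<forall>j. x $ j \<le> y $ j) \<and>
     (\<forall>j. s $ j \<le> M j * (1 - y $ j)) \<and>
     (\<forall>j. x $ j \<ge> 0) \<and> (\<forall>j. s $ j \<ge> 0) \<and>
     (\<forall>j. y $ j \<in> {0, 1})"

definition milp2_feasible ::
  "real ^ 'n ^ 'n \<Rightarrow> ('n \<Rightarrow> real) \<Rightarrow> real ^ 'n \<Rightarrow> real ^ 'n \<Rightarrow> real ^ 'n \<Rightarrow> real \<Rightarrow> bool" where
  "milp2_feasible Q U x z y alpha \<longleftrightarrow>
     (\<forall>j. (Q *v x) $ j \<le> alpha + z $ j) \<and>
     (\<Sum>j\<in>UNIV. x $ j) = 1 \<and>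
     (\<forall>j. x $ j \<le> y $ j) \<and>
     (\<forall>j. z $ j \<le> U j * (1 - y $ j)) \<and>
     (\<forall>j. x $ j \<ge> 0) \<and> (\<forall>j. z $ j \<ge> 0) \<and>
     (\<forall>j. y $ j \<in> {0, 1})"

text \<open>The cuts y_i + y_j \<le> 1 for i < j with Q_ii + Q_jj - 2 Q_ij \<le> 0
  (stated for i \<noteq> j; both the condition and the cut are symmetric in i, j
  since Q is symmetric).\<close>
definition cuts :: "real ^ 'n ^ 'n \<Rightarrow> real ^ 'n \<Rightarrow> bool" where
  "cuts Q y \<longleftrightarrow> (\<forall>i j. i \<noteq> j \<and> Q $ i $ i + Q $ j $ j - 2 * Q $ i $ j \<le> 0
                      \<longrightarrow> y $ i + y $ j \<le> 1)"

definition is_min_value :: "real set \<Rightarrow> real \<Rightarrow> bool" where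
  "is_min_value S v \<longleftrightarrow> v \<in> S \<and> (\<forall>w\<in>S. v \<le> w)"

end

theory Submission
  imports Defs
begin

text \<open>Write \<open>q x = x\<^sup>T Q x\<close>. A minimiser \<open>x\<close> of \<open>q\<close> on the simplex satisfies the
  KKT conditions \<open>(Q x)\<^sub>j \<ge> \<nu>(Q)\<close>, with equality on the support of \<open>x\<close>. Hence \<open>x\<close>, the
  slack \<open>Q x - \<nu>(Q) e\<close> and the indicator of the support of \<open>x\<close> form a feasible point of
  both MILPs with objective value \<open>\<nu>(Q)\<close>; conversely, since \<open>y\<close> is binary, \<open>x\<^sub>j s\<^sub>j = 0\<close>
  for every feasible point, which forces its objective value to be at least \<open>q x \<ge> \<nu>(Q)\<close>.
  If two indices \<open>i \<noteq> j\<close> of the support satisfy \<open>Q\<^sub>i\<^sub>i + Q\<^sub>j\<^sub>j - 2 Q\<^sub>i\<^sub>j \<le> 0\<close>, then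
  \<open>q\<close> is stationary and concave along \<open>e\<^sub>i - e\<^sub>j\<close> at \<open>x\<close>, so moving all mass from \<open>j\<close>
  to \<open>i\<close> yields a minimiser with smaller support. A minimiser of smallest support
  therefore satisfies the cuts.\<close>

abbreviation quad_form :: "real ^ 'n ^ 'n \<Rightarrow> real ^ 'n \<Rightarrow> real" where
  "quad_form Q x \<equiv> x \<bullet> (Q *v x)"

definition simplex_minimizer :: "real ^ 'n ^ 'n \<Rightarrow> real ^ 'n \<Rightarrow> bool" where
  "simplex_minimizer Q x \<longleftrightarrow>
     x \<in> std_simplex \<and> (\<forall>y\<in>std_simplex. quad_form Q x \<le> quad_form Q y)"

definition support_indicator :: "real ^ 'n \<Rightarrow> real ^ 'n" where
  "support_indicator x = (\<chi> j. if x $ j = 0 then 0 else 1)"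

lemma symmetric_matrix_entry:
  fixes Q :: "'a ^ 'n ^ 'n"
  assumes "transpose Q = Q"
  shows "Q $ i $ j = Q $ j $ i"
  by (metis assms transpose_def vec_lambda_beta)

lemma symmetric_matrix_inner_commute:
  fixes Q :: "real ^ 'n ^ 'n"
  assumes "transpose Q = Q"
  shows "u \<bullet> (Q *v v) = v \<bullet> (Q *v u)"
  by (metis assms dot_lmul_matrix inner_commute transpose_matrix_vector)

lemma quad_form_add_scaleR:
  fixes Q :: "real ^ 'n ^ 'n"
  assumes "transpose Q = Q"
  shows "quad_form Q (x + t *\<^sub>R w)
           = quad_form Q x + 2 * t * (w \<bullet> (Q *v x)) + t\<^sup>2 * quad_form Q w"
  using symmetric_matrix_inner_commute[OF assms, of x w]
  by (simp add: algebra_simps power2_eq_square)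

lemma quad_form_axis_diff:
  fixes Q :: "real ^ 'n ^ 'n"
  assumes "transpose Q = Q"
  shows "quad_form Q (axis i 1 - axis j 1) = Q $ i $ i + Q $ j $ j - 2 * Q $ i $ j"
  using symmetric_matrix_entry[OF assms, of i j]
  by (simp add: matrix_vector_mult_diff_distrib matrix_vector_mult_basis inner_diff_left
      inner_axis' column_def)

lemma nonneg_of_quadratic_nonneg_at_right:
  fixes g C :: real
  assumes "\<And>t. 0 < t \<Longrightarrow> t \<le> 1 \<Longrightarrow> 0 \<le> 2 * t * g + t\<^sup>2 * C"
  shows "0 \<le> g"
proof -
  have "((\<lambda>t. 2 * g + t * C) \<longlongrightarrow> 2 * g + 0 * C) (at_right 0)"
    by (intro tendsto_intros)
  moreover have "\<forall>\<^sub>F t in at_right 0. 0 \<le> 2 * g + t * C"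
  proof -
    have "\<forall>\<^sub>F t in at_right (0::real). 0 < t \<and> t \<le> 1"
      by (auto simp: eventually_at_right_field intro!: exI[of _ 1])
    then show ?thesis
    proof (rule eventually_mono)
      fix t :: real assume t: "0 < t \<and> t \<le> 1"
      have "0 \<le> 2 * t * g + t\<^sup>2 * C" using assms t by simp
      then have "0 \<le> t * (2 * g + t * C)" by (simp add: algebra_simps power2_eq_square)
      then show "0 \<le> 2 * g + t * C" using t by (simp add: zero_le_mult_iff)
    qed
  qed
  ultimately have "0 \<le> 2 * g + 0 * C"
    by (rule tendsto_lowerbound) simp
  then show ?thesis by simp
qed

lemma std_simplex_nonneg: "x \<in> std_simplex \<Longrightarrow> 0 \<le> x $ j"
  by (simp add: std_simplex_def)

lemma std_simplex_sum: "x \<in> std_simplex \<Longrightarrow> (\<Sum>j\<in>UNIV. x $ j) = 1"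
  by (simp add: std_simplex_def)

lemma std_simplex_component_le_1:
  assumes "x \<in> std_simplex"
  shows "x $ j \<le> 1"
proof -
  have "x $ j \<le> (\<Sum>k\<in>UNIV. x $ k)"
    by (rule member_le_sum) (simp_all add: std_simplex_nonneg[OF assms])
  then show ?thesis by (simp add: std_simplex_sum[OF assms])
qed

lemma axis_in_std_simplex: "axis j 1 \<in> std_simplex"
  by (simp add: std_simplex_def axis_def)

lemma convex_std_simplex: "convex std_simplex"
  unfolding convex_def std_simplex_def
  by (simp add: sum.distrib flip: sum_distrib_left)

lemma compact_std_simplex: "compact std_simplex"
proof -
  have "std_simplex = (\<Inter>j. {x. 0 \<le> x $ j}) \<inter> {x. (\<Sum>j\<in>UNIV. x $ j) = 1}"
    by (auto simp: std_simplex_def)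
  moreover have "closed {x :: real ^ 'n. 0 \<le> x $ j}" for j :: "'n::finite"
    by (intro closed_Collect_le continuous_intros)
  moreover have "closed {x :: real ^ 'n. (\<Sum>j\<in>UNIV. x $ j) = 1}"
    by (intro closed_Collect_eq continuous_intros)
  ultimately have "closed (std_simplex :: (real ^ 'n) set)"
    by (metis closed_INT closed_Int)
  moreover have "bounded (std_simplex :: (real ^ 'n) set)"
    unfolding bounded_iff
  proof (intro exI ballI)
    fix x :: "real ^ 'n" assume x: "x \<in> std_simplex"
    have "norm x \<le> (\<Sum>i\<in>UNIV. \<bar>x $ i\<bar>)" by (rule norm_le_l1_cart)
    also have "\<dots> = 1" using x by (simp add: std_simplex_def)
    finally show "norm x \<le> 1" .
  qed
  ultimately show ?thesis by (simp add: compact_eq_bounded_closed)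
qed

lemma std_simplex_shift_mass:
  fixes x :: "real ^ 'n"
  assumes "x \<in> std_simplex"
  shows "x + x $ j *\<^sub>R (axis i 1 - axis j 1) \<in> std_simplex"
proof -
  have "(\<Sum>k\<in>UNIV. (axis i 1 - axis j 1 :: real ^ 'n) $ k) = 0"
    by (simp add: sum_subtractf axis_def)
  then show ?thesis
    using assms by (auto simp: std_simplex_def sum.distrib axis_def simp flip: sum_distrib_left)
qed

lemma card_support_shift_mass_less:
  fixes x :: "real ^ 'n"
  assumes "i \<noteq> j" "0 < x $ i" "0 < x $ j"
  shows "card {k. (x + x $ j *\<^sub>R (axis i 1 - axis j 1)) $ k \<noteq> 0} < card {k. x $ k \<noteq> 0}"
proof (rule psubset_card_mono)
  show "{k. (x + x $ j *\<^sub>R (axis i 1 - axis j 1)) $ k \<noteq> 0} \<subset> {k. x $ k \<noteq> 0}"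
    using assms by (auto simp: axis_def)
qed simp

lemma simplex_minimizer_exists: "\<exists>x. simplex_minimizer (Q :: real ^ 'n ^ 'n) x"
proof -
  have "continuous_on std_simplex (quad_form Q)"
    by (intro continuous_on_inner continuous_on_id
        matrix_vector_mult_linear_continuous_on[unfolded o_def])
  then show ?thesis
    using continuous_attains_inf[OF compact_std_simplex] axis_in_std_simplex
    unfolding simplex_minimizer_def by blast
qed

lemma nu_eq_simplex_minimizer:
  fixes Q :: "real ^ 'n ^ 'n"
  assumes "simplex_minimizer Q x"
  shows "nu Q = quad_form Q x"
  unfolding nu_def by (rule cInf_eq_minimum) (use assms in \<open>auto simp: simplex_minimizer_def\<close>)

lemma simplex_minimizer_gradient_ge:
  fixes Q :: "real ^ 'n ^ 'n"
  assumes symQ: "transpose Q = Q" and min: "simplex_minimizer Q x"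
  shows "quad_form Q x \<le> (Q *v x) $ j"
proof -
  define w where "w = axis j 1 - x"
  have "0 \<le> w \<bullet> (Q *v x)"
  proof (rule nonneg_of_quadratic_nonneg_at_right)
    fix t :: real assume "0 < t" "t \<le> 1"
    then have "(1 - t) *\<^sub>R x + t *\<^sub>R axis j 1 \<in> std_simplex"
      using min convex_std_simplex axis_in_std_simplex
      by (intro convexD) (auto simp: simplex_minimizer_def)
    moreover have "(1 - t) *\<^sub>R x + t *\<^sub>R axis j 1 = x + t *\<^sub>R w"
      by (simp add: w_def algebra_simps)
    ultimately have "quad_form Q x \<le> quad_form Q (x + t *\<^sub>R w)"
      using min by (simp add: simplex_minimizer_def)
    then show "0 \<le> 2 * t * (w \<bullet> (Q *v x)) + t\<^sup>2 * quad_form Q w"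
      by (simp add: quad_form_add_scaleR[OF symQ])
  qed
  then show ?thesis by (simp add: w_def inner_diff_left inner_axis')
qed

lemma simplex_minimizer_gradient_eq:
  fixes Q :: "real ^ 'n ^ 'n"
  assumes symQ: "transpose Q = Q" and min: "simplex_minimizer Q x" and pos: "0 < x $ j"
  shows "(Q *v x) $ j = quad_form Q x"
proof -
  have x: "x \<in> std_simplex" using min by (simp add: simplex_minimizer_def)
  have "(\<Sum>k\<in>UNIV. x $ k * ((Q *v x) $ k - quad_form Q x))
          = quad_form Q x - (\<Sum>k\<in>UNIV. x $ k) * quad_form Q x"
    by (simp add: right_diff_distrib sum_subtractf inner_vec_def flip: sum_distrib_right)
  also have "\<dots> = 0" by (simp add: std_simplex_sum[OF x])
  finally have "(\<Sum>k\<in>UNIV. x $ k * ((Q *v x) $ k - quad_form Q x)) = 0" .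
  moreover have "\<forall>k\<in>UNIV. 0 \<le> x $ k * ((Q *v x) $ k - quad_form Q x)"
    using std_simplex_nonneg[OF x] simplex_minimizer_gradient_ge[OF symQ min] by simp
  ultimately have "x $ j * ((Q *v x) $ j - quad_form Q x) = 0"
    by (simp add: sum_nonneg_eq_0_iff)
  with pos show ?thesis by simp
qed

lemma simplex_minimizer_shift_mass:
  fixes Q :: "real ^ 'n ^ 'n"
  assumes symQ: "transpose Q = Q" and min: "simplex_minimizer Q x"
    and pos: "0 < x $ i" "0 < x $ j"
    and curv: "Q $ i $ i + Q $ j $ j - 2 * Q $ i $ j \<le> 0"
  shows "simplex_minimizer Q (x + x $ j *\<^sub>R (axis i 1 - axis j 1))"
proof -
  define w :: "real ^ 'n" where "w = axis i 1 - axis j 1"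
  have "w \<bullet> (Q *v x) = 0"
    using simplex_minimizer_gradient_eq[OF symQ min] pos
    by (simp add: w_def inner_diff_left inner_axis')
  then have "quad_form Q (x + x $ j *\<^sub>R w) = quad_form Q x + (x $ j)\<^sup>2 * quad_form Q w"
    by (simp add: quad_form_add_scaleR[OF symQ])
  also have "\<dots> \<le> quad_form Q x"
    using curv by (simp add: w_def quad_form_axis_diff[OF symQ] mult_nonneg_nonpos)
  finally show ?thesis
    using min std_simplex_shift_mass
    unfolding simplex_minimizer_def w_def by fastforce
qed

lemma simplex_minimizer_sparse_exists:
  fixes Q :: "real ^ 'n ^ 'n"
  assumes symQ: "transpose Q = Q"
  shows "\<exists>x. simplex_minimizer Q x \<and>
    (\<forall>i j. i \<noteq> j \<and> Q $ i $ i + Q $ j $ j - 2 * Q $ i $ j \<le> 0 \<longrightarrow> x $ i = 0 \<or> x $ j = 0)"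
proof -
  obtain x0 where "simplex_minimizer Q x0" using simplex_minimizer_exists by blast
  then obtain x where min: "simplex_minimizer Q x"
    and least: "\<forall>x'. simplex_minimizer Q x' \<longrightarrow> card {k. x $ k \<noteq> 0} \<le> card {k. x' $ k \<noteq> 0}"
    using ex_has_least_nat[of "simplex_minimizer Q" x0 "\<lambda>x. card {k. x $ k \<noteq> 0}"] by blast
  have x: "x \<in> std_simplex" using min by (simp add: simplex_minimizer_def)
  have "x $ i = 0 \<or> x $ j = 0"
    if "i \<noteq> j" and curv: "Q $ i $ i + Q $ j $ j - 2 * Q $ i $ j \<le> 0" for i j
  proof (rule ccontr)
    assume "\<not> (x $ i = 0 \<or> x $ j = 0)"
    then have pos: "0 < x $ i" "0 < x $ j"
      using std_simplex_nonneg[OF x, of i] std_simplex_nonneg[OF x, of j] by auto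
    show False
      using least[rule_format, OF simplex_minimizer_shift_mass[OF symQ min pos curv]]
        card_support_shift_mass_less[OF \<open>i \<noteq> j\<close> pos] by linarith
  qed
  with min show ?thesis by blast
qed

lemma matrix_vector_mult_component_le_Max:
  fixes Q :: "real ^ 'n ^ 'n"
  assumes x: "x \<in> std_simplex"
  shows "(Q *v x) $ j \<le> Max {Q $ j $ i | i. True}"
proof -
  have fin: "finite {Q $ j $ i | i. True}"
    by (simp add: full_SetCompr_eq)
  have "(Q *v x) $ j = (\<Sum>i\<in>UNIV. Q $ j $ i * x $ i)"
    by (simp add: matrix_vector_mult_def)
  also have "\<dots> \<le> (\<Sum>i\<in>UNIV. Max {Q $ j $ i | i. True} * x $ i)"
    using fin std_simplex_nonneg[OF x] by (intro sum_mono mult_right_mono) (auto intro: Max_ge)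
  also have "\<dots> = Max {Q $ j $ i | i. True}"
    by (simp add: std_simplex_sum[OF x] flip: sum_distrib_left)
  finally show ?thesis .
qed

lemma milp1_feasible_at_minimizer:
  fixes Q :: "real ^ 'n ^ 'n"
  assumes symQ: "transpose Q = Q" and lower: "l \<le> nu Q" and min: "simplex_minimizer Q x"
  shows "milp1_feasible Q (Mbound Q l) x (Q *v x - nu Q *\<^sub>R (\<chi> j. 1)) (support_indicator x) (nu Q)"
proof -
  have x: "x \<in> std_simplex" using min by (simp add: simplex_minimizer_def)
  have nu: "nu Q = quad_form Q x" by (rule nu_eq_simplex_minimizer[OF min])
  have slack: "(Q *v x) $ j - nu Q \<le> Mbound Q l j * (1 - support_indicator x $ j)" for j
  proof (cases "x $ j = 0")
    case True
    have "{Q $ j $ i | i. True} = {Q $ i $ j | i. True}"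
      by (metis symmetric_matrix_entry[OF symQ])
    then show ?thesis
      using True matrix_vector_mult_component_le_Max[OF x, of Q j] lower
      by (simp add: Mbound_def support_indicator_def)
  next
    case False
    then have "0 < x $ j" using std_simplex_nonneg[OF x, of j] by simp
    then show ?thesis
      by (simp add: nu simplex_minimizer_gradient_eq[OF symQ min] support_indicator_def)
  qed
  show ?thesis
    unfolding milp1_feasible_def
    using slack std_simplex_sum[OF x] std_simplex_nonneg[OF x] std_simplex_component_le_1[OF x]
      simplex_minimizer_gradient_ge[OF symQ min]
    by (simp add: nu support_indicator_def)
qed

lemma milp2_feasible_of_milp1_feasible:
  assumes F: "milp1_feasible Q M x s y lam" and M_le: "\<And>j. M j \<le> U j"
  shows "milp2_feasible Q U x s y lam"
proof -
  have "s $ j \<le> U j * (1 - y $ j)" for j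
  proof -
    have "y $ j \<in> {0, 1}" using F by (simp add: milp1_feasible_def)
    then have "M j * (1 - y $ j) \<le> U j * (1 - y $ j)"
      using M_le by (intro mult_right_mono) auto
    moreover have "s $ j \<le> M j * (1 - y $ j)" using F by (simp add: milp1_feasible_def)
    ultimately show ?thesis by linarith
  qed
  moreover have "(Q *v x) $ j = lam + s $ j" for j
  proof -
    have "(Q *v x) $ j - lam = s $ j" using F by (simp add: milp1_feasible_def vec_eq_iff)
    then show ?thesis by linarith
  qed
  ultimately show ?thesis
    using F by (simp add: milp1_feasible_def milp2_feasible_def)
qed

lemma complementarity_of_binary:
  fixes x y s M :: real
  assumes "x \<le> y" "s \<le> M * (1 - y)" "0 \<le> x" "0 \<le> s" "y \<in> {0, 1}"
  shows "x * s = 0"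
  using assms by auto

lemma milp2_feasible_objective_ge:
  assumes F: "milp2_feasible Q U x z y alpha"
  shows "x \<in> std_simplex" and "quad_form Q x \<le> alpha"
proof -
  show "x \<in> std_simplex" using F by (simp add: milp2_feasible_def std_simplex_def)
  have "quad_form Q x = (\<Sum>k\<in>UNIV. x $ k * (Q *v x) $ k)" by (simp add: inner_vec_def)
  also have "\<dots> \<le> (\<Sum>k\<in>UNIV. x $ k * (alpha + z $ k))"
    using F by (intro sum_mono mult_left_mono) (auto simp: milp2_feasible_def)
  also have "\<dots> = alpha * (\<Sum>k\<in>UNIV. x $ k) + (\<Sum>k\<in>UNIV. x $ k * z $ k)"
    by (simp add: distrib_left sum.distrib sum_distrib_left mult_ac)
  also have "\<dots> = alpha"
  proof -
    have "x $ k * z $ k = 0" for k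
      by (rule complementarity_of_binary[of _ "y $ k" _ "U k"]) (use F in \<open>auto simp: milp2_feasible_def\<close>)
    then have "(\<Sum>k\<in>UNIV. x $ k * z $ k) = 0" by (intro sum.neutral) blast
    then show ?thesis using F by (simp add: milp2_feasible_def)
  qed
  finally show "quad_form Q x \<le> alpha" .
qed

lemma is_min_value_nested:
  assumes "v \<in> A" "A \<subseteq> B" "\<forall>w\<in>B. v \<le> w"
  shows "is_min_value A v \<and> is_min_value B v"
  using assms by (auto simp: is_min_value_def)

theorem theorem2:
  fixes Q :: "real ^ 'n ^ 'n" and l :: real and U :: "'n \<Rightarrow> real"
  assumes symQ: "transpose Q = Q"
    and lower: "l \<le> nu Q"
    and U_ge: "\<And>j. U j \<ge> Mbound Q l j"
  shows "is_min_value {lam. \<exists>x s y. milp1_feasible Q (Mbound Q l) x s y lam} (nu Q)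
       \<and> is_min_value {lam. \<exists>x s y. milp1_feasible Q (Mbound Q l) x s y lam \<and> cuts Q y} (nu Q)
       \<and> is_min_value {alpha. \<exists>x z y. milp2_feasible Q U x z y alpha} (nu Q)
       \<and> is_min_value {alpha. \<exists>x z y. milp2_feasible Q U x z y alpha \<and> cuts Q y} (nu Q)"
proof -
  obtain x where min: "simplex_minimizer Q x"
    and sparse: "\<forall>i j. i \<noteq> j \<and> Q $ i $ i + Q $ j $ j - 2 * Q $ i $ j \<le> 0 \<longrightarrow> x $ i = 0 \<or> x $ j = 0"
    using simplex_minimizer_sparse_exists[OF symQ] by blast
  define s where "s = Q *v x - nu Q *\<^sub>R (\<chi> j. 1)"
  define y where "y = support_indicator x"
  have F1: "milp1_feasible Q (Mbound Q l) x s y (nu Q)"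
    unfolding s_def y_def by (rule milp1_feasible_at_minimizer[OF symQ lower min])
  have F2: "milp2_feasible Q U x s y (nu Q)"
    by (rule milp2_feasible_of_milp1_feasible[OF F1 U_ge])
  have cut: "cuts Q y"
    using sparse by (auto simp: cuts_def y_def support_indicator_def)
  have bound: "nu Q \<le> alpha" if "milp2_feasible Q U' x' z' y' alpha" for U' x' z' y' alpha
    using milp2_feasible_objective_ge[OF that] min nu_eq_simplex_minimizer[OF min]
    by (force simp: simplex_minimizer_def)
  have "is_min_value {lam. \<exists>x s y. milp1_feasible Q (Mbound Q l) x s y lam \<and> cuts Q y} (nu Q)
      \<and> is_min_value {lam. \<exists>x s y. milp1_feasible Q (Mbound Q l) x s y lam} (nu Q)"
    using F1 cut bound milp2_feasible_of_milp1_feasible[OF _ order_refl]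
    by (intro is_min_value_nested) blast+
  moreover have "is_min_value {alpha. \<exists>x z y. milp2_feasible Q U x z y alpha \<and> cuts Q y} (nu Q)
      \<and> is_min_value {alpha. \<exists>x z y. milp2_feasible Q U x z y alpha} (nu Q)"
    using F2 cut bound by (intro is_min_value_nested) blast+
  ultimately show ?thesis by blast
qed

end
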